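(* Let $G=(V,E)$ be a finite graph and let $\underline{r}^G=(r_v)_{v\in V}\in\mathbb{Z}^{V}$. Let $H$ be an arbitrary $2$-cover of $G$, and let $G\times K_2$ be the bipartite double cover of $G$. Let $\underline{r}$ denote the vector induced by $\underline{r}^G$ on $H$ and on $G\times K_2$, i.e. each lift $u'$ of a vertex $u\in V$ gets value $r_{u'}=r_u$. Then $$h_{\underline{r}}(G\times K_2)\geq h_{\underline{r}}(H).$$ In other words, for any $\underline{r}\in\mathbb{Z}^{V}$, among all $2$-covers $H$ of $G$ the quantity $h_{\underline{r}}(H)$ is maximized by $G\times K_2$.
   Context: A $2$-cover of $G$ is a graph with vertex set $V\times\{0,1\}$ obtained by choosing, for every edge $uv\in E$, either the pair of edges $(u,0)(v,0),(u,1)(v,1)$ or the pair $(u,0)(v,1),(u,1)(v,0)$, and having no other edges. The bipartite double cover $G\times K_2$ is the $2$-cover in which the second choice is made for every edge. For a graph $F$ and $\underline{r}=(r_v)\in\mathbb{Z}^{V(F)}$, $h_{\underline{r}}(F)$ denotes the number of subgraphs (edge subsets) $S$ of $F$ such that every vertex $v$ is incident to exactly $r_v$ edges of $S$. *)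

theory Defs
  imports Main
begin

definition simple_graph :: "'a set \<Rightarrow> 'a set set \<Rightarrow> bool" where
  "simple_graph V E \<longleftrightarrow> finite V \<and> (\<forall>e\<in>E. e \<subseteq> V \<and> card e = 2)"

text \<open>Edges of the 2-cover with vertex set V \<times> {False,True} (False = 0, True = 1)
  determined by the choice s: s e = True means the "parallel" pair
  (u,0)(v,0),(u,1)(v,1); s e = False means the "crossed" pair (u,0)(v,1),(u,1)(v,0).\<close>
definition cover_edges :: "'a set set \<Rightarrow> ('a set \<Rightarrow> bool) \<Rightarrow> ('a \<times> bool) set set" where
  "cover_edges E s = {{(u, i), (v, j)} | u v i j.
       {u, v} \<in> E \<and> u \<noteq> v \<and> (if s {u, v} then i = j else i \<noteq> j)}"

definition two_cover :: "'a set set \<Rightarrow> ('a \<times> bool) set set \<Rightarrow> bool" where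
  "two_cover E EH \<longleftrightarrow> (\<exists>s. EH = cover_edges E s)"

definition double_cover_edges :: "'a set set \<Rightarrow> ('a \<times> bool) set set" where
  "double_cover_edges E = cover_edges E (\<lambda>_. False)"

definition h_count :: "'b set \<Rightarrow> 'b set set \<Rightarrow> ('b \<Rightarrow> int) \<Rightarrow> nat" where
  "h_count VF EF r = card {S. S \<subseteq> EF \<and> (\<forall>v\<in>VF. int (card {e\<in>S. v \<in> e}) = r v)}"

end

theory Submission
  imports Defs "HOL-Library.FuncSet"
begin

(* A subgraph of a 2-cover is a set S of lifts (e, k) of edges of G, where the lift (e, k) meets the
   fibre over u in the layer k XOR t e u for a layering t describing the cover. Fix the set T of
   edges of G having exactly one lift in S: then S is r-regular iff at every vertex the darts of T are
   split evenly between the two layers. Count the pairs (S, p) where p matches, at every vertex, the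
   darts of T in one layer with those in the other; every such S admits the same positive number of
   matchings p. For a fixed p, the involution p and the involution exchanging the two darts of each
   edge have a common proper 2-colouring. Since the layering of G x K2 differs at the two ends of
   every edge, this colouring yields an edgewise flip of lifts which injects the S compatible with p
   for an arbitrary cover into those for G x K2. *)

definition fpf_involution_on :: "'a set \<Rightarrow> ('a \<Rightarrow> 'a) \<Rightarrow> bool" where
  "fpf_involution_on X p \<longleftrightarrow> (\<forall>x\<in>X. p x \<in> X \<and> p (p x) = x \<and> p x \<noteq> x)"

lemma fpf_involution_on_Diff_pair:
  assumes "fpf_involution_on X p" "x \<in> X"
  shows "fpf_involution_on (X - {x, p x}) p"
  using assms unfolding fpf_involution_on_def by (auto, metis+)

lemma fpf_involution_on_Diff_swap:
  assumes "fpf_involution_on X q" "x \<in> X" "y \<in> X" "x \<noteq> y" "q x \<noteq> y"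
  shows "fpf_involution_on (X - {x, y}) (q(q x := q y, q y := q x))"
  using assms unfolding fpf_involution_on_def by (auto, metis+)

definition alternating_on :: "'a set \<Rightarrow> ('a \<Rightarrow> 'a) \<Rightarrow> ('a \<Rightarrow> bool) \<Rightarrow> bool" where
  "alternating_on X p f \<longleftrightarrow> (\<forall>x\<in>X. f (p x) \<noteq> f x)"

lemma alternating_on_extend_pair:
  assumes p: "fpf_involution_on X p" and q: "fpf_involution_on X q"
    and x: "x \<in> X" "q x = p x"
    and f: "alternating_on (X - {x, p x}) p f" "alternating_on (X - {x, p x}) q f"
  defines "g \<equiv> f(x := True, p x := False)"
  shows "alternating_on X p g \<and> alternating_on X q g"
proof -
  let ?X' = "X - {x, p x}"
  have "fpf_involution_on ?X' p" using fpf_involution_on_Diff_pair[OF p x(1)] .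
  moreover have "fpf_involution_on ?X' q" using fpf_involution_on_Diff_pair[OF q x(1)] x(2) by simp
  ultimately have pX': "\<And>z. z \<in> ?X' \<Longrightarrow> p z \<in> ?X'" and qX': "\<And>z. z \<in> ?X' \<Longrightarrow> q z \<in> ?X'"
    unfolding fpf_involution_on_def by blast+
  have px: "p (p x) = x" "p x \<noteq> x" using p x(1) unfolding fpf_involution_on_def by blast+
  have qpx: "q (p x) = x" using q x unfolding fpf_involution_on_def by metis
  have "g (p z) \<noteq> g z \<and> g (q z) \<noteq> g z" if z: "z \<in> X" for z
  proof -
    consider "z \<in> ?X'" | "z = x" | "z = p x" using z by blast
    then show ?thesis
    proof cases
      case 1
      then show ?thesis using f pX' qX' unfolding alternating_on_def g_def by fastforce
    qed (use x(2) px qpx in \<open>simp_all add: g_def\<close>)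
  qed
  then show ?thesis unfolding alternating_on_def by blast
qed

lemma alternating_on_extend_swap:
  assumes p: "fpf_involution_on X p" and q: "fpf_involution_on X q"
    and x: "x \<in> X" "q x \<noteq> p x"
    and f: "alternating_on (X - {x, p x}) p f"
      "alternating_on (X - {x, p x}) (q(q x := q (p x), q (p x) := q x)) f"
  defines "g \<equiv> f(x := \<not> f (q x), p x := f (q x))"
  shows "alternating_on X p g \<and> alternating_on X q g"
proof -
  let ?X' = "X - {x, p x}" and ?q' = "q(q x := q (p x), q (p x) := q x)"
  have pq: "\<And>z. z \<in> X \<Longrightarrow> p z \<in> X \<and> p (p z) = z \<and> p z \<noteq> z \<and> q z \<in> X \<and> q (q z) = z \<and> q z \<noteq> z"
    using p q unfolding fpf_involution_on_def by blast
  have pX': "\<And>z. z \<in> ?X' \<Longrightarrow> p z \<in> ?X'"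
    using fpf_involution_on_Diff_pair[OF p x(1)] unfolding fpf_involution_on_def by blast
  have q'X': "\<And>z. z \<in> ?X' \<Longrightarrow> ?q' z \<in> ?X'"
    using fpf_involution_on_Diff_swap[OF q x(1), of "p x"] pq[OF x(1)] x(2)
    unfolding fpf_involution_on_def by metis
  have a: "q x \<in> ?X'" using pq[OF x(1)] x(2) by simp
  have b: "q (p x) \<in> ?X'" using pq[OF x(1)] pq[of "p x"] x(2) by force
  have ab: "q x \<noteq> q (p x)" using pq[OF x(1)] pq[of "p x"] by metis
  have fab: "f (q (p x)) \<noteq> f (q x)"
    using f(2) a ab unfolding alternating_on_def by (metis fun_upd_same fun_upd_other)
  have g: "\<And>z. z \<in> ?X' \<Longrightarrow> g z = f z" unfolding g_def by simp
  have "g (p z) \<noteq> g z \<and> g (q z) \<noteq> g z" if z: "z \<in> X" for z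
  proof -
    consider "z \<in> ?X'" "z \<noteq> q x" "z \<noteq> q (p x)" | "z = q x" | "z = q (p x)" | "z = x" | "z = p x"
      using z by blast
    then show ?thesis
    proof cases
      case 1
      then show ?thesis
        using f g pX' q'X'[OF 1(1)] unfolding alternating_on_def by (metis fun_upd_other)
    qed (use a b ab fab g pX' f pq x in \<open>auto simp: g_def alternating_on_def\<close>)
  qed
  then show ?thesis unfolding alternating_on_def by blast
qed

lemma fpf_involutions_two_colouring:
  assumes "finite X" "fpf_involution_on X p" "fpf_involution_on X q"
  shows "\<exists>f. alternating_on X p f \<and> alternating_on X q f"
  using assms
proof (induction "card X" arbitrary: X q rule: less_induct)
  case less
  show ?case
  proof (cases "X = {}")
    case False
    then obtain x where x: "x \<in> X" by blast
    let ?X' = "X - {x, p x}"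
    have smaller: "card ?X' < card X"
      using less.prems x by (intro psubset_card_mono) (auto simp: fpf_involution_on_def)
    have fin: "finite ?X'" using less.prems(1) by simp
    have p': "fpf_involution_on ?X' p" using fpf_involution_on_Diff_pair[OF less.prems(2) x] .
    show ?thesis
    proof (cases "q x = p x")
      case True
      then have "fpf_involution_on ?X' q" using fpf_involution_on_Diff_pair[OF less.prems(3) x] by simp
      then obtain f where "alternating_on ?X' p f" "alternating_on ?X' q f"
        using less.hyps[OF smaller fin p'] by blast
      then show ?thesis using alternating_on_extend_pair[OF less.prems(2,3) x True] by blast
    next
      case False
      have "p x \<in> X" "x \<noteq> p x" using less.prems(2) x unfolding fpf_involution_on_def by auto
      then have "fpf_involution_on ?X' (q(q x := q (p x), q (p x) := q x))"
        using fpf_involution_on_Diff_swap[OF less.prems(3) x] False by blast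
      then obtain f where "alternating_on ?X' p f" "alternating_on ?X' (q(q x := q (p x), q (p x) := q x)) f"
        using less.hyps[OF smaller fin p'] by blast
      then show ?thesis using alternating_on_extend_swap[OF less.prems(2,3) x False] by blast
    qed
  qed (simp add: alternating_on_def)
qed

definition fibre_pairings :: "('a \<Rightarrow> 'b) \<Rightarrow> 'a set \<Rightarrow> ('a \<Rightarrow> 'a) set" where
  "fibre_pairings \<pi> X = {p \<in> X \<rightarrow>\<^sub>E X. fpf_involution_on X p \<and> (\<forall>x\<in>X. \<pi> (p x) = \<pi> x)}"

definition separating_pairings :: "('a \<Rightarrow> 'b) \<Rightarrow> 'a set \<Rightarrow> 'a set \<Rightarrow> ('a \<Rightarrow> 'a) set" where
  "separating_pairings \<pi> X Z = {p \<in> fibre_pairings \<pi> X. \<forall>x\<in>X. (p x \<in> Z) \<noteq> (x \<in> Z)}"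

definition fibrewise_balanced :: "('a \<Rightarrow> 'b) \<Rightarrow> 'a set \<Rightarrow> 'a set \<Rightarrow> bool" where
  "fibrewise_balanced \<pi> X Z \<longleftrightarrow>
     Z \<subseteq> X \<and> (\<forall>b. card {x\<in>Z. \<pi> x = b} = card {x\<in>X - Z. \<pi> x = b})"

lemma finite_fibre_pairings: "finite X \<Longrightarrow> finite (fibre_pairings \<pi> X)"
  unfolding fibre_pairings_def by (rule finite_subset[of _ "X \<rightarrow>\<^sub>E X"]) (auto intro: finite_PiE)

lemma finite_separating_pairings: "finite X \<Longrightarrow> finite (separating_pairings \<pi> X Z)"
  unfolding separating_pairings_def by (rule finite_subset[OF _ finite_fibre_pairings]) blast+

lemma fibrewise_balanced_card_fibre:
  assumes "finite X" "fibrewise_balanced \<pi> X Z"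
  shows "card {x\<in>X. \<pi> x = b} = 2 * card {x\<in>Z. \<pi> x = b}"
proof -
  have "{x\<in>X. \<pi> x = b} = {x\<in>Z. \<pi> x = b} \<union> {x\<in>X - Z. \<pi> x = b}"
    using assms(2) unfolding fibrewise_balanced_def by blast
  also have "card \<dots> = card {x\<in>Z. \<pi> x = b} + card {x\<in>X - Z. \<pi> x = b}"
    using assms unfolding fibrewise_balanced_def
    by (intro card_Un_disjoint) (auto intro: rev_finite_subset)
  finally show ?thesis using assms(2) unfolding fibrewise_balanced_def by simp
qed

lemma fibrewise_balanced_if_separating:
  assumes "Z \<subseteq> X" "p \<in> separating_pairings \<pi> X Z"
  shows "fibrewise_balanced \<pi> X Z"
proof -
  have p: "\<And>x. x \<in> X \<Longrightarrow> p x \<in> X \<and> p (p x) = x \<and> \<pi> (p x) = \<pi> x \<and> (p x \<in> Z) \<noteq> (x \<in> Z)"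
    using assms(2) unfolding separating_pairings_def fibre_pairings_def fpf_involution_on_def by auto
  have "bij_betw p {x\<in>Z. \<pi> x = b} {x\<in>X - Z. \<pi> x = b}" for b
    by (rule bij_betw_byWitness[where f' = p]) (use p assms(1) in auto)
  then show ?thesis using assms(1) unfolding fibrewise_balanced_def by (metis bij_betw_same_card)
qed

lemma ex_bij_betw_fibrewise:
  assumes "finite A" "finite B" "\<And>k. card {x\<in>A. \<kappa> x = k} = card {y\<in>B. \<kappa>' y = k}"
  shows "\<exists>g. bij_betw g A B \<and> (\<forall>x\<in>A. \<kappa>' (g x) = \<kappa> x)"
proof -
  have "\<forall>k. \<exists>h. bij_betw h {x\<in>A. \<kappa> x = k} {y\<in>B. \<kappa>' y = k}"
    using assms by (intro allI finite_same_card_bij) auto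
  then obtain h where h: "\<And>k. bij_betw (h k) {x\<in>A. \<kappa> x = k} {y\<in>B. \<kappa>' y = k}"
    by (rule choice[THEN exE]) blast
  define g where "g x = h (\<kappa> x) x" for x
  have maps: "g x \<in> B \<and> \<kappa>' (g x) = \<kappa> x" if "x \<in> A" for x
  proof -
    have "h (\<kappa> x) x \<in> {y\<in>B. \<kappa>' y = \<kappa> x}" by (rule bij_betw_apply[OF h]) (simp add: that)
    then show ?thesis unfolding g_def by simp
  qed
  have "inj_on g A"
  proof (rule inj_onI)
    fix x y assume xy: "x \<in> A" "y \<in> A" "g x = g y"
    then have "\<kappa> x = \<kappa> y" using maps[OF xy(1)] maps[OF xy(2)] by simp
    then show "x = y"
      using xy inj_onD[OF bij_betw_imp_inj_on[OF h[of "\<kappa> x"]], of x y] unfolding g_def by simp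
  qed
  moreover have "g ` A = B"
  proof
    show "B \<subseteq> g ` A"
    proof
      fix y assume "y \<in> B"
      then have "y \<in> h (\<kappa>' y) ` {x\<in>A. \<kappa> x = \<kappa>' y}"
        using bij_betw_imp_surj_on[OF h[of "\<kappa>' y"]] by simp
      then obtain x where x: "x \<in> A" "\<kappa> x = \<kappa>' y" "y = h (\<kappa>' y) x" by blast
      then have "g x = y" unfolding g_def by simp
      then show "y \<in> g ` A" using x(1) by blast
    qed
  qed (use maps in auto)
  ultimately show ?thesis using maps unfolding bij_betw_def by blast
qed

lemma separating_pairings_nonempty:
  assumes "finite X" "fibrewise_balanced \<pi> X Z"
  shows "separating_pairings \<pi> X Z \<noteq> {}"
proof -
  have Z: "Z \<subseteq> X" using assms(2) unfolding fibrewise_balanced_def by blast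
  have "\<exists>g. bij_betw g Z (X - Z) \<and> (\<forall>x\<in>Z. \<pi> (g x) = \<pi> x)"
    by (rule ex_bij_betw_fibrewise)
      (use assms Z in \<open>auto simp: fibrewise_balanced_def intro: rev_finite_subset\<close>)
  then obtain g where g: "bij_betw g Z (X - Z)" "\<forall>x\<in>Z. \<pi> (g x) = \<pi> x" by blast
  let ?h = "inv_into Z g"
  define p where "p = restrict (\<lambda>x. if x \<in> Z then g x else ?h x) X"
  have "p x \<in> X \<and> p (p x) = x \<and> p x \<noteq> x \<and> \<pi> (p x) = \<pi> x \<and> (p x \<in> Z) \<noteq> (x \<in> Z)"
    if x: "x \<in> X" for x
  proof (cases "x \<in> Z")
    case True
    then have "g x \<in> X - Z" using bij_betwE[OF g(1)] by blast
    then show ?thesis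
      using True g(2) Z bij_betw_inv_into_left[OF g(1) True] unfolding p_def by auto
  next
    case False
    then have "?h x \<in> Z" using x bij_betwE[OF bij_betw_inv_into[OF g(1)]] by blast
    moreover have "g (?h x) = x" using x False bij_betw_inv_into_right[OF g(1)] by blast
    moreover have "p x = ?h x" unfolding p_def using x False by simp
    ultimately show ?thesis using x False g(2) Z unfolding p_def by auto
  qed
  moreover have "p \<in> extensional X" unfolding p_def by simp
  ultimately have "p \<in> separating_pairings \<pi> X Z"
    unfolding separating_pairings_def fibre_pairings_def fpf_involution_on_def PiE_iff by blast
  then show ?thesis by blast
qed

lemma separating_pairings_conj:
  assumes \<sigma>: "bij_betw \<sigma> X X" "\<forall>x\<in>X. \<pi> (\<sigma> x) = \<pi> x \<and> (\<sigma> x \<in> Z') = (x \<in> Z)"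
    and p: "p \<in> separating_pairings \<pi> X Z"
  shows "restrict (\<sigma> \<circ> p \<circ> inv_into X \<sigma>) X \<in> separating_pairings \<pi> X Z'"
proof -
  let ?\<tau> = "inv_into X \<sigma>"
  have \<tau>: "?\<tau> x \<in> X \<and> \<sigma> (?\<tau> x) = x" if "x \<in> X" for x
    using that bij_betw_inv_into_right[OF \<sigma>(1)] bij_betw_apply[OF bij_betw_inv_into[OF \<sigma>(1)]]
    by blast
  have \<tau>\<sigma>: "?\<tau> (\<sigma> x) = x" if "x \<in> X" for x
    using that bij_betw_inv_into_left[OF \<sigma>(1)] by blast
  have \<sigma>X: "\<sigma> x \<in> X" if "x \<in> X" for x using that bij_betw_apply[OF \<sigma>(1)] by blast
  have pX: "\<And>x. x \<in> X \<Longrightarrow> p x \<in> X \<and> p (p x) = x \<and> p x \<noteq> x \<and> \<pi> (p x) = \<pi> x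
      \<and> (p x \<in> Z) \<noteq> (x \<in> Z)"
    using p unfolding separating_pairings_def fibre_pairings_def fpf_involution_on_def by auto
  define q where "q = restrict (\<sigma> \<circ> p \<circ> ?\<tau>) X"
  have q: "q x = \<sigma> (p (?\<tau> x))" if "x \<in> X" for x unfolding q_def using that by simp
  have "q x \<in> X \<and> q (q x) = x \<and> q x \<noteq> x \<and> \<pi> (q x) = \<pi> x \<and> (q x \<in> Z') \<noteq> (x \<in> Z')"
    if x: "x \<in> X" for x
  proof -
    let ?y = "?\<tau> x"
    have y: "?y \<in> X" "\<sigma> ?y = x" using \<tau>[OF x] by auto
    have qX: "q x \<in> X" using q[OF x] \<sigma>X pX y by simp
    moreover have "q (q x) = x" using q[OF x] q[OF qX] \<sigma>X pX y \<tau>\<sigma> by simp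
    moreover have "q x \<noteq> x" using q[OF x] pX y \<tau>\<sigma> by metis
    moreover have "\<pi> (q x) = \<pi> x" using q[OF x] pX y \<sigma>(2) by metis
    moreover have "(q x \<in> Z') \<noteq> (x \<in> Z')" using q[OF x] pX y \<sigma>(2) by metis
    ultimately show ?thesis by blast
  qed
  moreover have "q \<in> extensional X" unfolding q_def by simp
  ultimately have "q \<in> separating_pairings \<pi> X Z'"
    unfolding separating_pairings_def fibre_pairings_def fpf_involution_on_def PiE_iff by blast
  then show ?thesis unfolding q_def .
qed

lemma ex_fibrewise_bij_onto_balanced:
  assumes "finite X" "fibrewise_balanced \<pi> X Z" "fibrewise_balanced \<pi> X Z'"
  shows "\<exists>\<sigma>. bij_betw \<sigma> X X \<and> (\<forall>x\<in>X. \<pi> (\<sigma> x) = \<pi> x \<and> (\<sigma> x \<in> Z') = (x \<in> Z))"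
proof -
  have "\<exists>\<sigma>. bij_betw \<sigma> X X \<and> (\<forall>x\<in>X. (\<pi> (\<sigma> x), \<sigma> x \<in> Z') = (\<pi> x, x \<in> Z))"
  proof (rule ex_bij_betw_fibrewise)
    fix k :: "'b \<times> bool"
    obtain b c where k: "k = (b, c)" by fastforce
    have half: "card {x\<in>X. \<pi> x = b \<and> x \<in> W} = card {x\<in>X. \<pi> x = b \<and> x \<notin> W}
        \<and> 2 * card {x\<in>X. \<pi> x = b \<and> x \<in> W} = card {x\<in>X. \<pi> x = b}"
      if "fibrewise_balanced \<pi> X W" for W
    proof -
      have "{x\<in>X. \<pi> x = b \<and> x \<in> W} = {x\<in>W. \<pi> x = b}" "{x\<in>X. \<pi> x = b \<and> x \<notin> W} = {x\<in>X - W. \<pi> x = b}"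
        using that unfolding fibrewise_balanced_def by auto
      then show ?thesis
        using that fibrewise_balanced_card_fibre[OF assms(1) that, of b]
        unfolding fibrewise_balanced_def by simp
    qed
    show "card {x\<in>X. (\<pi> x, x \<in> Z) = k} = card {y\<in>X. (\<pi> y, y \<in> Z') = k}"
      using half[OF assms(2)] half[OF assms(3)] unfolding k by (cases c) auto
  qed (use assms(1) in auto)
  then show ?thesis by auto
qed

lemma card_separating_pairings_le:
  assumes "finite X" "fibrewise_balanced \<pi> X Z" "fibrewise_balanced \<pi> X Z'"
  shows "card (separating_pairings \<pi> X Z) \<le> card (separating_pairings \<pi> X Z')"
proof -
  obtain \<sigma> where \<sigma>: "bij_betw \<sigma> X X" "\<forall>x\<in>X. \<pi> (\<sigma> x) = \<pi> x \<and> (\<sigma> x \<in> Z') = (x \<in> Z)"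
    using ex_fibrewise_bij_onto_balanced[OF assms] by blast
  let ?conj = "\<lambda>p. restrict (\<sigma> \<circ> p \<circ> inv_into X \<sigma>) X"
  have "inj_on ?conj (separating_pairings \<pi> X Z)"
  proof (rule inj_onI)
    fix p1 p2 assume p: "p1 \<in> separating_pairings \<pi> X Z" "p2 \<in> separating_pairings \<pi> X Z"
      and eq: "?conj p1 = ?conj p2"
    have ext: "p1 \<in> X \<rightarrow>\<^sub>E X" "p2 \<in> X \<rightarrow>\<^sub>E X"
      using p unfolding separating_pairings_def fibre_pairings_def by auto
    show "p1 = p2"
    proof (rule PiE_ext[OF ext])
      fix y assume y: "y \<in> X"
      have "?conj p1 (\<sigma> y) = ?conj p2 (\<sigma> y)" using eq by simp
      then have "\<sigma> (p1 y) = \<sigma> (p2 y)"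
        using y bij_betw_apply[OF \<sigma>(1) y] bij_betw_inv_into_left[OF \<sigma>(1) y] by simp
      then show "p1 y = p2 y"
        using y ext bij_betw_imp_inj_on[OF \<sigma>(1)] by (auto dest: inj_onD)
    qed
  qed
  moreover have "?conj ` separating_pairings \<pi> X Z \<subseteq> separating_pairings \<pi> X Z'"
    using separating_pairings_conj[OF \<sigma>] by blast
  moreover have "finite (separating_pairings \<pi> X Z')"
    using finite_separating_pairings[OF assms(1)] .
  ultimately show ?thesis by (rule card_inj_on_le)
qed

lemma card_separating_pairings_eq:
  assumes "finite X" "fibrewise_balanced \<pi> X Z" "fibrewise_balanced \<pi> X Z'"
  shows "card (separating_pairings \<pi> X Z) = card (separating_pairings \<pi> X Z')"
  using card_separating_pairings_le[OF assms] card_separating_pairings_le[OF assms(1,3,2)]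
  by (rule antisym)

definition lift :: "('v set \<Rightarrow> 'v \<Rightarrow> bool) \<Rightarrow> 'v set \<Rightarrow> bool \<Rightarrow> ('v \<times> bool) set" where
  "lift t e k = (\<lambda>u. (u, k \<noteq> t e u)) ` e"

definition lift_degree :: "('v set \<Rightarrow> 'v \<Rightarrow> bool) \<Rightarrow> ('v set \<times> bool) set \<Rightarrow> 'v \<Rightarrow> bool \<Rightarrow> nat" where
  "lift_degree t S u i = card {(e, k) \<in> S. u \<in> e \<and> (k \<noteq> t e u) = i}"

definition regular_lift_sets ::
    "'v set set \<Rightarrow> 'v set \<Rightarrow> ('v \<Rightarrow> int) \<Rightarrow> ('v set \<Rightarrow> 'v \<Rightarrow> bool) \<Rightarrow> ('v set \<times> bool) set set" where
  "regular_lift_sets E V r t =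
     {S. S \<subseteq> E \<times> UNIV \<and> (\<forall>u\<in>V. \<forall>i. int (lift_degree t S u i) = r u)}"

lemma finite_regular_lift_sets: "finite E \<Longrightarrow> finite (regular_lift_sets E V r t)"
  by (rule finite_subset[of _ "Pow (E \<times> UNIV)"]) (auto simp: regular_lift_sets_def)

lemma inj_on_lift:
  assumes "\<forall>e\<in>E. e \<noteq> {}"
  shows "inj_on (\<lambda>(e, k). lift t e k) (E \<times> UNIV)"
proof (rule inj_onI, clarify)
  fix e k e' k' assume e: "e \<in> E" and eq: "lift t e k = lift t e' k'"
  have fst_lift: "fst ` lift t e k = e" for e k unfolding lift_def by force
  have "e = e'" using fst_lift[of e k] fst_lift[of e' k'] eq by simp
  moreover obtain u where "u \<in> e" using assms e by blast
  then have "(u, k \<noteq> t e u) \<in> lift t e' k'" using eq unfolding lift_def by blast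
  ultimately show "e = e' \<and> k = k'" unfolding lift_def by auto
qed

lemma h_count_lifts:
  assumes "\<forall>e\<in>E. e \<noteq> {}"
  shows "h_count (V \<times> UNIV) ((\<lambda>(e, k). lift t e k) ` (E \<times> UNIV)) (\<lambda>x. r (fst x))
    = card (regular_lift_sets E V r t)"
proof -
  let ?L = "\<lambda>(e, k). lift t e k"
  have inj: "inj_on ?L (E \<times> UNIV)" using inj_on_lift[OF assms] .
  have deg: "card {l \<in> ?L ` S. (u, i) \<in> l} = lift_degree t S u i" if "S \<subseteq> E \<times> UNIV" for S u i
  proof -
    have "{l \<in> ?L ` S. (u, i) \<in> l} = ?L ` {x \<in> S. (u, i) \<in> ?L x}" by blast
    also have "card \<dots> = card {x \<in> S. (u, i) \<in> ?L x}"
      by (rule card_image, rule inj_on_subset[OF inj]) (use that in blast)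
    also have "{x \<in> S. (u, i) \<in> ?L x} = {(e, k) \<in> S. u \<in> e \<and> (k \<noteq> t e u) = i}"
      unfolding lift_def by force
    finally show ?thesis unfolding lift_degree_def .
  qed
  have cond: "(\<forall>v\<in>V \<times> UNIV. int (card {l \<in> ?L ` S. v \<in> l}) = r (fst v))
      \<longleftrightarrow> (\<forall>u\<in>V. \<forall>i. int (lift_degree t S u i) = r u)" if "S \<subseteq> E \<times> UNIV" for S
    using deg[OF that] by auto
  have "{S. S \<subseteq> ?L ` (E \<times> UNIV) \<and> (\<forall>v\<in>V \<times> UNIV. int (card {l \<in> S. v \<in> l}) = r (fst v))}
      = image ?L ` regular_lift_sets E V r t"
  proof (intro equalityI subsetI)
    fix S assume S: "S \<in> {S. S \<subseteq> ?L ` (E \<times> UNIV) \<and> (\<forall>v\<in>V \<times> UNIV. int (card {l \<in> S. v \<in> l}) = r (fst v))}"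
    then obtain S' where S': "S' \<subseteq> E \<times> UNIV" "S = ?L ` S'" unfolding subset_image_iff by blast
    then have "S' \<in> regular_lift_sets E V r t"
      using S cond[OF S'(1)] unfolding regular_lift_sets_def by simp
    then show "S \<in> image ?L ` regular_lift_sets E V r t" using S'(2) by blast
  next
    fix S assume "S \<in> image ?L ` regular_lift_sets E V r t"
    then obtain S' where S': "S' \<subseteq> E \<times> UNIV" "\<forall>u\<in>V. \<forall>i. int (lift_degree t S' u i) = r u"
      and S: "S = ?L ` S'"
      unfolding regular_lift_sets_def by blast
    then show "S \<in> {S. S \<subseteq> ?L ` (E \<times> UNIV) \<and> (\<forall>v\<in>V \<times> UNIV. int (card {l \<in> S. v \<in> l}) = r (fst v))}"
      using cond[OF S'(1)] image_mono[OF S'(1)] by simp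
  qed
  moreover have "inj_on (image ?L) (regular_lift_sets E V r t)"
    using inj_on_image_Pow[OF inj] by (rule inj_on_subset) (auto simp: regular_lift_sets_def)
  ultimately show ?thesis unfolding h_count_def by (simp add: card_image)
qed

definition doubled_edges :: "('e \<times> bool) set \<Rightarrow> 'e set" where
  "doubled_edges S = {e. (e, True) \<in> S \<and> (e, False) \<in> S}"

definition single_edges :: "('e \<times> bool) set \<Rightarrow> 'e set" where
  "single_edges S = {e. ((e, True) \<in> S) \<noteq> ((e, False) \<in> S)}"

definition darts :: "'v set set \<Rightarrow> ('v set \<times> 'v) set" where
  "darts T = (SIGMA e:T. e)"

(* For e \<in> single_edges S the lift of e in S is (e, (e, True) \<in> S). *)
definition dart_layer :: "('v set \<Rightarrow> 'v \<Rightarrow> bool) \<Rightarrow> ('v set \<times> bool) set \<Rightarrow> 'v set \<times> 'v \<Rightarrow> bool" where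
  "dart_layer t S x = (((fst x, True) \<in> S) \<noteq> t (fst x) (snd x))"

definition upper_darts :: "('v set \<Rightarrow> 'v \<Rightarrow> bool) \<Rightarrow> ('v set \<times> bool) set \<Rightarrow> ('v set \<times> 'v) set" where
  "upper_darts t S = {x \<in> darts (single_edges S). dart_layer t S x}"

lemma finite_darts: "finite T \<Longrightarrow> \<forall>e\<in>T. finite e \<Longrightarrow> finite (darts T)"
  unfolding darts_def by blast

lemma single_edges_subset: "S \<subseteq> E \<times> UNIV \<Longrightarrow> single_edges S \<subseteq> E"
  unfolding single_edges_def by auto

lemma finite_darts_single_edges:
  assumes "S \<subseteq> E \<times> UNIV" "finite E" "\<forall>e\<in>E. finite e"
  shows "finite (darts (single_edges S))"
  using single_edges_subset[OF assms(1)] assms(2,3)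
  by (intro finite_darts) (auto intro: rev_finite_subset)

lemma lifts_at_vertex_eq:
  "{(e, k) \<in> S. u \<in> e \<and> (k \<noteq> t e u) = i}
    = (\<lambda>e. (e, i \<noteq> t e u)) ` {e \<in> doubled_edges S. u \<in> e}
      \<union> (\<lambda>x. (fst x, (fst x, True) \<in> S)) `
          {x \<in> darts (single_edges S). snd x = u \<and> dart_layer t S x = i}"
  (is "_ = ?A \<union> ?B")
proof (rule equalityI)
  let ?D = "{e \<in> doubled_edges S. u \<in> e}"
  let ?T = "{x \<in> darts (single_edges S). snd x = u \<and> dart_layer t S x = i}"
  show "{(e, k) \<in> S. u \<in> e \<and> (k \<noteq> t e u) = i} \<subseteq> ?A \<union> ?B"
  proof
    fix y assume "y \<in> {(e, k) \<in> S. u \<in> e \<and> (k \<noteq> t e u) = i}"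
    then obtain e k where y: "y = (e, k)" and ek: "(e, k) \<in> S" "u \<in> e" "i = (k \<noteq> t e u)"
      by blast
    have "(e, k) \<in> ?A \<union> ?B"
    proof (cases "(e, \<not> k) \<in> S")
      case True
      then have "(e, True) \<in> S \<and> (e, False) \<in> S" using ek(1) by (cases k) simp_all
      then have "e \<in> ?D" using ek(2) unfolding doubled_edges_def by simp
      moreover have "k = (i \<noteq> t e u)" using ek(3) by (cases k) simp_all
      ultimately show ?thesis by (intro UnI1 rev_image_eqI[of e]) simp_all
    next
      case False
      then have k: "k = ((e, True) \<in> S)" using ek(1) by (cases k) simp_all
      have "e \<in> single_edges S" using ek(1) False unfolding single_edges_def by (cases k) simp_all
      then have "(e, u) \<in> ?T" using ek(2,3) k unfolding darts_def dart_layer_def by simp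
      then show ?thesis using k by (intro UnI2 rev_image_eqI[of "(e, u)"]) simp_all
    qed
    then show "y \<in> ?A \<union> ?B" using y by simp
  qed
  show "?A \<union> ?B \<subseteq> {(e, k) \<in> S. u \<in> e \<and> (k \<noteq> t e u) = i}"
  proof
    fix y assume "y \<in> ?A \<union> ?B"
    then consider (doubled) e where "e \<in> ?D" "y = (e, i \<noteq> t e u)"
      | (single) x where "x \<in> ?T" "y = (fst x, (fst x, True) \<in> S)"
      by blast
    then show "y \<in> {(e, k) \<in> S. u \<in> e \<and> (k \<noteq> t e u) = i}"
    proof cases
      case doubled
      then have "(e, i \<noteq> t e u) \<in> S" unfolding doubled_edges_def by (cases "i \<noteq> t e u") simp_all
      then show ?thesis using doubled by (cases i) simp_all
    next
      case single
      then obtain e where e: "x = (e, u)" "e \<in> single_edges S" "u \<in> e"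
        unfolding darts_def by auto
      have "(e, (e, True) \<in> S) \<in> S"
        using e(2) unfolding single_edges_def by (cases "(e, True) \<in> S") simp_all
      moreover have "dart_layer t S (e, u) = i" using single(1) e(1) by simp
      ultimately show ?thesis using single(2) e unfolding dart_layer_def by simp
    qed
  qed
qed

lemma lift_degree_split:
  assumes "S \<subseteq> E \<times> UNIV" "finite E" "\<forall>e\<in>E. finite e"
  shows "lift_degree t S u i = card {e \<in> doubled_edges S. u \<in> e}
    + card {x \<in> darts (single_edges S). snd x = u \<and> dart_layer t S x = i}"
proof -
  let ?D = "{e \<in> doubled_edges S. u \<in> e}"
  let ?T = "{x \<in> darts (single_edges S). snd x = u \<and> dart_layer t S x = i}"
  let ?A = "(\<lambda>e. (e, i \<noteq> t e u)) ` ?D"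
  let ?B = "(\<lambda>x. (fst x, (fst x, True) \<in> S)) ` ?T"
  have fin: "finite ?D" "finite ?T"
    using finite_darts_single_edges[OF assms] assms(1,2) unfolding doubled_edges_def
    by (auto intro: rev_finite_subset)
  have "card (?A \<union> ?B) = card ?A + card ?B"
    using fin by (intro card_Un_disjoint) (auto simp: doubled_edges_def single_edges_def darts_def)
  also have "\<dots> = card ?D + card ?T"
    by (simp add: card_image inj_on_def prod_eq_iff)
  finally show ?thesis unfolding lift_degree_def lifts_at_vertex_eq .
qed

lemma upper_darts_fibres:
  "{x \<in> upper_darts t S. snd x = u} = {x \<in> darts (single_edges S). snd x = u \<and> dart_layer t S x = True}"
  "{x \<in> darts (single_edges S) - upper_darts t S. snd x = u}
     = {x \<in> darts (single_edges S). snd x = u \<and> dart_layer t S x = False}"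
  unfolding upper_darts_def by auto

lemma upper_darts_balanced_if_regular:
  assumes "S \<in> regular_lift_sets E V r t" "finite E" "\<forall>e\<in>E. finite e \<and> e \<subseteq> V"
  shows "fibrewise_balanced snd (darts (single_edges S)) (upper_darts t S)"
proof -
  let ?X = "darts (single_edges S)"
  have S: "S \<subseteq> E \<times> UNIV" and deg: "\<forall>u\<in>V. \<forall>i. int (lift_degree t S u i) = r u"
    using assms(1) unfolding regular_lift_sets_def by auto
  have fin: "\<forall>e\<in>E. finite e" using assms(3) by blast
  have "card {x \<in> ?X. snd x = u \<and> dart_layer t S x = True}
      = card {x \<in> ?X. snd x = u \<and> dart_layer t S x = False}" for u
  proof (cases "u \<in> V")
    case True
    then have "int (lift_degree t S u True) = int (lift_degree t S u False)" using deg by simp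
    then show ?thesis using lift_degree_split[OF S assms(2) fin, of t u] by simp
  next
    case False
    have "x \<notin> ?X" if "snd x = u" for x
      using that False assms(3) single_edges_subset[OF S] unfolding darts_def by fastforce
    then have empty: "{x \<in> ?X. snd x = u \<and> dart_layer t S x = b} = {}" for b by blast
    show ?thesis unfolding empty ..
  qed
  then show ?thesis unfolding fibrewise_balanced_def upper_darts_fibres
    unfolding upper_darts_def by simp
qed

lemma lift_degree_if_separated:
  assumes "S \<subseteq> E \<times> UNIV" "finite E" "\<forall>e\<in>E. finite e"
    and "separating_pairings snd (darts (single_edges S)) (upper_darts t S) \<noteq> {}"
  shows "2 * lift_degree t S u i
    = 2 * card {e \<in> doubled_edges S. u \<in> e} + card {x \<in> darts (single_edges S). snd x = u}"
proof -
  let ?X = "darts (single_edges S)" and ?Z = "upper_darts t S"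
  have bal: "fibrewise_balanced snd ?X ?Z"
    using assms(4) fibrewise_balanced_if_separating[of ?Z ?X] unfolding upper_darts_def by blast
  have finX: "finite ?X" using finite_darts_single_edges[OF assms(1-3)] .
  have "card {x \<in> ?X. snd x = u} = 2 * card {x \<in> ?X. snd x = u \<and> dart_layer t S x = i}"
  proof (cases i)
    case True
    then show ?thesis using fibrewise_balanced_card_fibre[OF finX bal] unfolding upper_darts_fibres by simp
  next
    case False
    then show ?thesis using fibrewise_balanced_card_fibre[OF finX bal] bal
      unfolding fibrewise_balanced_def upper_darts_fibres by simp
  qed
  then show ?thesis using lift_degree_split[OF assms(1-3)] by simp
qed

lemma separating_pairings_upper_darts_iff:
  "p \<in> separating_pairings snd (darts (single_edges S)) (upper_darts t S) \<longleftrightarrow>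
     p \<in> fibre_pairings snd (darts (single_edges S)) \<and>
     (\<forall>x\<in>darts (single_edges S). dart_layer t S (p x) \<noteq> dart_layer t S x)"
proof -
  have "p x \<in> darts (single_edges S)"
    if "p \<in> fibre_pairings snd (darts (single_edges S))" "x \<in> darts (single_edges S)" for x
    using that unfolding fibre_pairings_def by auto
  then show ?thesis unfolding separating_pairings_def upper_darts_def by auto
qed

definition flip_lifts :: "'e set \<Rightarrow> ('e \<times> bool) set \<Rightarrow> ('e \<times> bool) set" where
  "flip_lifts F S = (\<lambda>(e, k). (e, k \<noteq> (e \<in> F))) ` S"

lemma mem_flip_lifts: "(e, k) \<in> flip_lifts F S \<longleftrightarrow> (e, k \<noteq> (e \<in> F)) \<in> S"
proof
  assume "(e, k) \<in> flip_lifts F S"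
  then obtain k' where "(e, k') \<in> S" "k = (k' \<noteq> (e \<in> F))" unfolding flip_lifts_def by auto
  then show "(e, k \<noteq> (e \<in> F)) \<in> S" by (cases k'; cases "e \<in> F") simp_all
next
  assume "(e, k \<noteq> (e \<in> F)) \<in> S"
  then show "(e, k) \<in> flip_lifts F S"
    unfolding flip_lifts_def by (rule rev_image_eqI) (cases k; cases "e \<in> F"; simp)
qed

lemma flip_lifts_flip_lifts [simp]: "flip_lifts F (flip_lifts F S) = S"
proof -
  have "(e, k) \<in> flip_lifts F (flip_lifts F S) \<longleftrightarrow> (e, k) \<in> S" for e k
    unfolding mem_flip_lifts by (cases k; cases "e \<in> F") simp_all
  then show ?thesis by auto
qed

lemma inj_flip_lifts: "inj (flip_lifts F)"
  by (metis flip_lifts_flip_lifts injI)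

lemma flip_lifts_subset: "S \<subseteq> E \<times> UNIV \<Longrightarrow> flip_lifts F S \<subseteq> E \<times> UNIV"
  unfolding flip_lifts_def by auto

lemma doubled_edges_flip_lifts [simp]: "doubled_edges (flip_lifts F S) = doubled_edges S"
proof -
  have "e \<in> doubled_edges (flip_lifts F S) \<longleftrightarrow> e \<in> doubled_edges S" for e
    unfolding doubled_edges_def mem_flip_lifts by (cases "e \<in> F") auto
  then show ?thesis by blast
qed

lemma single_edges_flip_lifts [simp]: "single_edges (flip_lifts F S) = single_edges S"
proof -
  have "e \<in> single_edges (flip_lifts F S) \<longleftrightarrow> e \<in> single_edges S" for e
    unfolding single_edges_def mem_flip_lifts by (cases "e \<in> F") auto
  then show ?thesis by blast
qed

lemma dart_layer_flip_lifts:
  assumes "fst x \<in> single_edges S"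
  shows "dart_layer t (flip_lifts F S) x = (dart_layer t S x \<noteq> (fst x \<in> F))"
  using assms unfolding dart_layer_def single_edges_def mem_flip_lifts
  by (cases "fst x \<in> F"; cases "(fst x, True) \<in> S") simp_all

lemma the_elem_Diff_card_2:
  assumes "card e = 2" "u \<in> e" "v \<in> e" "u \<noteq> v"
  shows "the_elem (e - {u}) = v"
proof -
  obtain a b where "e = {a, b}" using assms(1) by (auto simp: card_2_iff)
  then have "e - {u} = {v}" using assms(2-4) by auto
  then show ?thesis by simp
qed

lemma fpf_involution_on_other_dart:
  assumes "\<forall>e\<in>T. card e = 2"
  shows "fpf_involution_on (darts T) (\<lambda>(e, u). (e, the_elem (e - {u})))"
proof -
  let ?q = "\<lambda>(e, u). (e, the_elem (e - {u}))"
  have "?q x \<in> darts T \<and> ?q (?q x) = x \<and> ?q x \<noteq> x" if xT: "x \<in> darts T" for x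
  proof -
    obtain e u where x: "x = (e, u)" "e \<in> T" "u \<in> e" using xT unfolding darts_def by blast
    then have e: "card e = 2" using assms by blast
    then obtain v where v: "v \<in> e" "v \<noteq> u" using x(3) by (metis card_2_iff insertCI)
    have "the_elem (e - {u}) = v" "the_elem (e - {v}) = u"
      using the_elem_Diff_card_2[OF e] x v by auto
    then show ?thesis using x v unfolding darts_def by simp
  qed
  then show ?thesis unfolding fpf_involution_on_def by blast
qed

lemma ex_dart_colouring:
  assumes "finite T" and T: "\<forall>e\<in>T. card e = 2"
    and crossing: "\<forall>e\<in>T. \<forall>u\<in>e. \<forall>v\<in>e. u \<noteq> v \<longrightarrow> t' e u \<noteq> t' e v"
    and p: "fpf_involution_on (darts T) p"
  shows "\<exists>f. alternating_on (darts T) p f \<and>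
    (\<forall>e\<in>T. \<forall>u\<in>e. \<forall>v\<in>e. (f (e, u) \<noteq> t' e u) = (f (e, v) \<noteq> t' e v))"
proof -
  let ?X = "darts T" and ?q = "\<lambda>(e, u). (e, the_elem (e - {u}))"
  have "finite ?X" using assms(1) T by (intro finite_darts) (auto intro: card_ge_0_finite)
  from fpf_involutions_two_colouring[OF this p fpf_involution_on_other_dart[OF T]]
  obtain f where f: "alternating_on ?X p f" "alternating_on ?X ?q f" by blast
  have "(f (e, u) \<noteq> t' e u) = (f (e, v) \<noteq> t' e v)" if e: "e \<in> T" "u \<in> e" "v \<in> e" for e u v
  proof (cases "u = v")
    case False
    have "(e, u) \<in> ?X" using e unfolding darts_def by blast
    moreover have "?q (e, u) = (e, v)" using e T the_elem_Diff_card_2[of e u v] False by simp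
    ultimately have "f (e, v) \<noteq> f (e, u)" using f(2) unfolding alternating_on_def by fastforce
    moreover have "t' e u \<noteq> t' e v" using crossing e False by blast
    ultimately show ?thesis by (cases "f (e, u)"; cases "t' e u") simp_all
  qed simp
  then show ?thesis using f(1) by blast
qed

lemma ex_flip_lifts_separated:
  assumes "finite T" and T: "\<forall>e\<in>T. card e = 2"
    and crossing: "\<forall>e\<in>T. \<forall>u\<in>e. \<forall>v\<in>e. u \<noteq> v \<longrightarrow> t' e u \<noteq> t' e v"
    and S0: "single_edges S0 = T" "p \<in> separating_pairings snd (darts T) (upper_darts t S0)"
  shows "\<exists>F. \<forall>S. single_edges S = T \<longrightarrow>
    p \<in> separating_pairings snd (darts T) (upper_darts t S) \<longrightarrow>
    p \<in> separating_pairings snd (darts T) (upper_darts t' (flip_lifts F S))"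
proof -
  let ?X = "darts T"
  have p: "p \<in> fibre_pairings snd ?X" and sep0: "\<forall>x\<in>?X. dart_layer t S0 (p x) \<noteq> dart_layer t S0 x"
    using S0 separating_pairings_upper_darts_iff by blast+
  have pX: "p x \<in> ?X" if "x \<in> ?X" for x using p that unfolding fibre_pairings_def by auto
  have "fpf_involution_on ?X p" using p unfolding fibre_pairings_def by blast
  from ex_dart_colouring[OF assms(1) T crossing this]
  obtain f where alt: "alternating_on ?X p f"
    and ends: "\<forall>e\<in>T. \<forall>u\<in>e. \<forall>v\<in>e. (f (e, u) \<noteq> t' e u) = (f (e, v) \<noteq> t' e v)"
    by blast
  have f: "\<forall>x\<in>?X. f (p x) \<noteq> f x" using alt unfolding alternating_on_def .
  have same_end: "(f (e, u) \<noteq> t' e u) = (f (e, v) \<noteq> t' e v)" if "e \<in> T" "u \<in> e" "v \<in> e" for e u v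
    using ends that by blast
  define F where "F = {e. ((e, True) \<in> S0) \<noteq> (f (e, SOME u. u \<in> e) \<noteq> t' e (SOME u. u \<in> e))}"
  have layer: "dart_layer t' (flip_lifts F S) x = ((dart_layer t S x \<noteq> dart_layer t S0 x) \<noteq> f x)"
    if S: "single_edges S = T" and xX: "x \<in> ?X" for S x
  proof -
    obtain e u where x: "x = (e, u)" "e \<in> T" "u \<in> e" using xX unfolding darts_def by blast
    then have "(SOME u. u \<in> e) \<in> e" by (metis someI)
    from same_end[OF x(2) this x(3)]
    have "(e \<in> F) = (((e, True) \<in> S0) \<noteq> (f (e, u) \<noteq> t' e u))"
      unfolding F_def mem_Collect_eq by (rule arg_cong)
    moreover have "dart_layer t' (flip_lifts F S) x = (dart_layer t' S x \<noteq> (e \<in> F))"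
      using dart_layer_flip_lifts[of x S t' F] S x by simp
    ultimately show ?thesis unfolding x dart_layer_def
      by (cases "(e, True) \<in> S"; cases "(e, True) \<in> S0"; cases "f (e, u)"; cases "t' e u"; cases "t e u")
        simp_all
  qed
  have "p \<in> separating_pairings snd ?X (upper_darts t' (flip_lifts F S))"
    if S: "single_edges S = T" "p \<in> separating_pairings snd ?X (upper_darts t S)" for S
  proof -
    have sep: "\<forall>x\<in>?X. dart_layer t S (p x) \<noteq> dart_layer t S x"
      using S separating_pairings_upper_darts_iff by blast
    \<comment> \<open>p reverses each of the three summands in \<open>layer\<close>\<close>
    have "dart_layer t' (flip_lifts F S) (p x) \<noteq> dart_layer t' (flip_lifts F S) x" if x: "x \<in> ?X" for x
      unfolding layer[OF S(1) x] layer[OF S(1) pX[OF x]]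
      using sep x sep0 f by (metis (full_types))
    then show ?thesis using p S(1) separating_pairings_upper_darts_iff[of p "flip_lifts F S" t'] by simp
  qed
  then show ?thesis by blast
qed

lemma regular_lift_sets_if_separated:
  assumes S: "S \<in> regular_lift_sets E V r t" and S': "S' \<subseteq> E \<times> UNIV"
    and E: "finite E" "\<forall>e\<in>E. finite e"
    and edges: "doubled_edges S' = doubled_edges S" "single_edges S' = single_edges S"
    and sep: "separating_pairings snd (darts (single_edges S)) (upper_darts t S) \<noteq> {}"
    and sep': "separating_pairings snd (darts (single_edges S')) (upper_darts t' S') \<noteq> {}"
  shows "S' \<in> regular_lift_sets E V r t'"
proof -
  have SE: "S \<subseteq> E \<times> UNIV" using S unfolding regular_lift_sets_def by blast
  have "2 * lift_degree t' S' u i = 2 * lift_degree t S u i" for u i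
    using lift_degree_if_separated[OF S' E sep'] lift_degree_if_separated[OF SE E sep] edges by simp
  then show ?thesis using S S' unfolding regular_lift_sets_def by simp
qed

lemma card_separated_regular_le:
  assumes E: "finite E" "\<forall>e\<in>E. card e = 2"
    and crossing: "\<forall>e\<in>E. \<forall>u\<in>e. \<forall>v\<in>e. u \<noteq> v \<longrightarrow> t' e u \<noteq> t' e v"
    and T: "T \<subseteq> E"
  shows "card {S \<in> regular_lift_sets E V r t. single_edges S = T \<and>
             p \<in> separating_pairings snd (darts T) (upper_darts t S)}
       \<le> card {S \<in> regular_lift_sets E V r t'. single_edges S = T \<and>
             p \<in> separating_pairings snd (darts T) (upper_darts t' S)}"
    (is "card ?A \<le> card ?B")
proof (cases "?A = {}")
  case False
  then obtain S0 where S0: "S0 \<in> ?A" by blast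
  have fin: "finite T" using E(1) T by (rule rev_finite_subset)
  have fe: "\<forall>e\<in>E. finite e" using E(2) by (simp add: card_ge_0_finite)
  obtain F where F: "\<And>S. single_edges S = T \<Longrightarrow>
      p \<in> separating_pairings snd (darts T) (upper_darts t S) \<Longrightarrow>
      p \<in> separating_pairings snd (darts T) (upper_darts t' (flip_lifts F S))"
  proof -
    have "\<forall>e\<in>T. card e = 2" "\<forall>e\<in>T. \<forall>u\<in>e. \<forall>v\<in>e. u \<noteq> v \<longrightarrow> t' e u \<noteq> t' e v"
      "single_edges S0 = T" "p \<in> separating_pairings snd (darts T) (upper_darts t S0)"
      using E(2) crossing T S0 by auto
    from ex_flip_lifts_separated[OF fin this] show thesis using that by blast
  qed
  have "flip_lifts F S \<in> ?B" if S: "S \<in> ?A" for S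
  proof -
    have SE: "S \<subseteq> E \<times> UNIV" and ST: "single_edges S = T"
      and sep: "p \<in> separating_pairings snd (darts T) (upper_darts t S)"
      using S unfolding regular_lift_sets_def by auto
    have sep': "p \<in> separating_pairings snd (darts T) (upper_darts t' (flip_lifts F S))"
      using F[OF ST sep] .
    have "flip_lifts F S \<in> regular_lift_sets E V r t'"
      using S sep sep' ST
      by (intro regular_lift_sets_if_separated[OF _ flip_lifts_subset[OF SE] E(1) fe]) auto
    then show ?thesis using ST sep' by simp
  qed
  then have "flip_lifts F ` ?A \<subseteq> ?B" by blast
  moreover have "inj_on (flip_lifts F) ?A" using inj_flip_lifts by (rule inj_on_subset) simp
  moreover have "finite ?B"
    by (rule rev_finite_subset[OF finite_regular_lift_sets[OF E(1)]]) blast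
  ultimately show ?thesis by (intro card_inj_on_le)
qed (simp only: card.empty zero_le)

lemma sum_card_filter_swap:
  assumes "finite A" "finite B"
  shows "(\<Sum>a\<in>A. card {b \<in> B. R a b}) = (\<Sum>b\<in>B. card {a \<in> A. R a b})"
  using sum.swap_restrict[OF assms, of "\<lambda>_ _. 1::nat" R] by simp

lemma card_regular_fibre_le:
  assumes E: "finite E" "\<forall>e\<in>E. card e = 2 \<and> e \<subseteq> V"
    and crossing: "\<forall>e\<in>E. \<forall>u\<in>e. \<forall>v\<in>e. u \<noteq> v \<longrightarrow> t' e u \<noteq> t' e v"
    and T: "T \<subseteq> E"
  shows "card {S \<in> regular_lift_sets E V r t. single_edges S = T}
       \<le> card {S \<in> regular_lift_sets E V r t'. single_edges S = T}"
proof (cases "{S \<in> regular_lift_sets E V r t. single_edges S = T} = {}")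
  case False
  let ?X = "darts T"
  let ?R = "\<lambda>\<tau>. {S \<in> regular_lift_sets E V r \<tau>. single_edges S = T}"
  let ?sep = "\<lambda>\<tau> S. separating_pairings snd ?X (upper_darts \<tau> S)"
  have fe: "\<forall>e\<in>E. finite e \<and> e \<subseteq> V" using E(2) by (simp add: card_ge_0_finite)
  have finX: "finite ?X"
    using E(1) T fe by (intro finite_darts) (auto intro: rev_finite_subset)
  have finR: "finite (?R \<tau>)" for \<tau>
    by (rule rev_finite_subset[OF finite_regular_lift_sets[OF E(1)]]) blast
  have bal: "fibrewise_balanced snd ?X (upper_darts \<tau> S)" if "S \<in> ?R \<tau>" for \<tau> S
    using upper_darts_balanced_if_regular[OF _ E(1) fe] that by blast
  from False obtain S0 where S0: "S0 \<in> ?R t" by blast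
  define C where "C = card (?sep t S0)"
  have "C > 0"
    using separating_pairings_nonempty[OF finX bal[OF S0]] finite_separating_pairings[OF finX]
    unfolding C_def by (simp add: card_gt_0_iff)
  have double_count: "C * card (?R \<tau>)
      = (\<Sum>p\<in>fibre_pairings snd ?X. card {S \<in> ?R \<tau>. p \<in> ?sep \<tau> S})" for \<tau>
  proof -
    have "card (?sep \<tau> S) = C" if "S \<in> ?R \<tau>" for S
      unfolding C_def using card_separating_pairings_eq[OF finX bal[OF that] bal[OF S0]] .
    then have "C * card (?R \<tau>) = (\<Sum>S\<in>?R \<tau>. card (?sep \<tau> S))" by simp
    also have "\<dots> = (\<Sum>S\<in>?R \<tau>. card {p \<in> fibre_pairings snd ?X. p \<in> ?sep \<tau> S})"
      unfolding separating_pairings_def by simp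
    also have "\<dots> = (\<Sum>p\<in>fibre_pairings snd ?X. card {S \<in> ?R \<tau>. p \<in> ?sep \<tau> S})"
      by (rule sum_card_filter_swap[OF finR finite_fibre_pairings[OF finX]])
    finally show ?thesis .
  qed
  have filter: "{S \<in> ?R \<tau>. p \<in> ?sep \<tau> S}
      = {S \<in> regular_lift_sets E V r \<tau>. single_edges S = T \<and> p \<in> ?sep \<tau> S}" for \<tau> p
    by blast
  have "card {S \<in> ?R t. p \<in> ?sep t S} \<le> card {S \<in> ?R t'. p \<in> ?sep t' S}" for p
    unfolding filter by (rule card_separated_regular_le[OF E(1) _ crossing T]) (use E(2) in blast)
  then have "C * card (?R t) \<le> C * card (?R t')"
    unfolding double_count by (rule sum_mono)
  then show ?thesis using \<open>C > 0\<close> by simp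
qed (simp only: card.empty zero_le)

lemma card_regular_lift_sets_le:
  assumes "finite E" "\<forall>e\<in>E. card e = 2 \<and> e \<subseteq> V"
    and "\<forall>e\<in>E. \<forall>u\<in>e. \<forall>v\<in>e. u \<noteq> v \<longrightarrow> t' e u \<noteq> t' e v"
  shows "card (regular_lift_sets E V r t) \<le> card (regular_lift_sets E V r t')"
proof -
  have img: "single_edges ` regular_lift_sets E V r \<tau> \<subseteq> Pow E" for \<tau>
    unfolding regular_lift_sets_def using single_edges_subset by blast
  have "card (regular_lift_sets E V r \<tau>)
      = (\<Sum>T\<in>Pow E. card {S \<in> regular_lift_sets E V r \<tau>. single_edges S = T})" for \<tau>
    using sum.group[OF finite_regular_lift_sets[OF assms(1)] _ img, where h = "\<lambda>_. 1::nat"]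
      assms(1) by simp
  moreover have "(\<Sum>T\<in>Pow E. card {S \<in> regular_lift_sets E V r t. single_edges S = T})
      \<le> (\<Sum>T\<in>Pow E. card {S \<in> regular_lift_sets E V r t'. single_edges S = T})"
    by (rule sum_mono) (use card_regular_fibre_le[OF assms] in blast)
  ultimately show ?thesis by simp
qed

(* Measured from the end chosen by SOME, the lifts of a crossed edge change layer at the other end. *)
definition cover_layer :: "('v set \<Rightarrow> bool) \<Rightarrow> 'v set \<Rightarrow> 'v \<Rightarrow> bool" where
  "cover_layer s e u \<longleftrightarrow> \<not> s e \<and> u \<noteq> (SOME v. v \<in> e)"

lemma cover_layer_differs:
  assumes "u \<noteq> v"
  shows "(cover_layer s {u, v} u \<noteq> cover_layer s {u, v} v) \<longleftrightarrow> \<not> s {u, v}"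
proof -
  have "(SOME w. w \<in> {u, v}) \<in> {u, v}" by (rule someI[of _ u]) simp
  then show ?thesis using assms unfolding cover_layer_def by auto
qed

lemma lift_doubleton: "lift t {u, v} k = {(u, k \<noteq> t {u, v} u), (v, k \<noteq> t {u, v} v)}"
  unfolding lift_def by simp

lemma cover_edges_eq_lifts:
  assumes "\<forall>e\<in>E. card e = 2"
  shows "cover_edges E s = (\<lambda>(e, k). lift (cover_layer s) e k) ` (E \<times> UNIV)"
proof
  let ?t = "cover_layer s"
  show "cover_edges E s \<subseteq> (\<lambda>(e, k). lift ?t e k) ` (E \<times> UNIV)"
  proof
    fix l assume "l \<in> cover_edges E s"
    then obtain u v i j where l: "l = {(u, i), (v, j)}" "{u, v} \<in> E" "u \<noteq> v"
      "if s {u, v} then i = j else i \<noteq> j"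
      unfolding cover_edges_def by blast
    let ?k = "i \<noteq> ?t {u, v} u"
    have "j = (?k \<noteq> ?t {u, v} v)"
      using l(4) cover_layer_differs[OF l(3), of s]
      by (cases i; cases "?t {u, v} u"; cases "?t {u, v} v"; cases "s {u, v}") simp_all
    then have "l = lift ?t {u, v} ?k"
      unfolding l(1) lift_doubleton by (cases i; cases "?t {u, v} u") simp_all
    then show "l \<in> (\<lambda>(e, k). lift ?t e k) ` (E \<times> UNIV)" using l(2) by blast
  qed
  show "(\<lambda>(e, k). lift ?t e k) ` (E \<times> UNIV) \<subseteq> cover_edges E s"
  proof clarify
    fix e k assume e: "e \<in> E"
    then obtain u v where uv: "e = {u, v}" "u \<noteq> v" using assms by (meson card_2_iff)
    have "if s {u, v} then (k \<noteq> ?t e u) = (k \<noteq> ?t e v) else (k \<noteq> ?t e u) \<noteq> (k \<noteq> ?t e v)"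
      using cover_layer_differs[OF uv(2), of s] unfolding uv(1)
      by (cases k; cases "?t {u, v} u"; cases "?t {u, v} v"; cases "s {u, v}") simp_all
    then show "lift ?t e k \<in> cover_edges E s"
      unfolding cover_edges_def lift_doubleton uv(1) using e uv by blast
  qed
qed

lemma cover_layer_crossing:
  assumes "\<forall>e\<in>E. card e = 2"
  shows "\<forall>e\<in>E. \<forall>u\<in>e. \<forall>v\<in>e. u \<noteq> v \<longrightarrow> cover_layer (\<lambda>_. False) e u \<noteq> cover_layer (\<lambda>_. False) e v"
proof (intro ballI impI)
  fix e u v assume "e \<in> E" "u \<in> e" "v \<in> e" "u \<noteq> v"
  then have "e = {u, v}" using assms by (fastforce simp: card_2_iff)
  then show "cover_layer (\<lambda>_. False) e u \<noteq> cover_layer (\<lambda>_. False) e v"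
    using cover_layer_differs[OF \<open>u \<noteq> v\<close>] by simp
qed

theorem theorem1p8:
  fixes V :: "'a set" and E :: "'a set set" and r :: "'a \<Rightarrow> int"
    and EH :: "('a \<times> bool) set set"
  assumes "simple_graph V E"
    and "two_cover E EH"
  shows "h_count (V \<times> UNIV) EH (\<lambda>x. r (fst x))
           \<le> h_count (V \<times> UNIV) (double_cover_edges E) (\<lambda>x. r (fst x))"
proof -
  obtain s where EH: "EH = cover_edges E s" using assms(2) unfolding two_cover_def by blast
  have E: "\<forall>e\<in>E. card e = 2 \<and> e \<subseteq> V" and "finite V"
    using assms(1) unfolding simple_graph_def by auto
  then have "finite E" by (meson Pow_iff finite_Pow_iff rev_finite_subset subsetI)
  have E2: "\<forall>e\<in>E. card e = 2" using E by blast
  then have nonempty: "\<forall>e\<in>E. e \<noteq> {}" by fastforce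
  have "h_count (V \<times> UNIV) EH (\<lambda>x. r (fst x)) = card (regular_lift_sets E V r (cover_layer s))"
    unfolding EH cover_edges_eq_lifts[OF E2] by (rule h_count_lifts[OF nonempty])
  also have "\<dots> \<le> card (regular_lift_sets E V r (cover_layer (\<lambda>_. False)))"
    by (rule card_regular_lift_sets_le[OF \<open>finite E\<close> E cover_layer_crossing[OF E2]])
  also have "\<dots> = h_count (V \<times> UNIV) (double_cover_edges E) (\<lambda>x. r (fst x))"
    unfolding double_cover_edges_def cover_edges_eq_lifts[OF E2]
    by (rule h_count_lifts[OF nonempty, symmetric])
  finally show ?thesis .
qed

end
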